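(* Let $d\ge5$, $\varepsilon\in(0,1/12)$ and $L_u=u^{2\varepsilon}/\sqrt u$. There exist $u_1=u_1(\varepsilon)>0$ and constants $\xi>0$, $C>0$ such that for all $u\in(0,u_1)$, $\mathbb P(\mathscr C_u)\ge1-Ce^{-\xi u^{-\varepsilon}}$, where $\mathscr C_u$ is the event that every path $w\in\vec{\mathcal W}_u$ satisfies $\mathrm{cap}\big(\mathrm{range}(w)\cap B(2L_u)\big)<u^{-2\varepsilon}L_u^2$.
   Context: Random interlacements at level $u$ on $\mathbb{Z}^d$. $\vec{\mathcal W}_u$ denotes the collection of paths obtained by taking each trajectory with label $\le u$ that hits $B(2L_u)$ and keeping its part from its first entrance into $B(2L_u)$ onwards; their number is Poisson with parameter $u\,\mathrm{cap}(B(2L_u))$ and, given the number, they are i.i.d. simple random walks started from the normalized equilibrium measure of $B(2L_u)$. $B(r)=[-r,r)^d\cap\mathbb{Z}^d$, $\mathrm{cap}$ is discrete capacity, $\mathrm{range}(w)$ the set of visited vertices. *)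

theory Defs
  imports "HOL-Analysis.Analysis" "HOL-Probability.Probability"
begin

text \<open>The lattice Z^d is modelled as int ^ 'd, with d = CARD('d).\<close>

definition box_Zd :: "real \<Rightarrow> (int ^ 'd::finite) set" where
  "box_Zd r = {x. \<forall>i. - r \<le> real_of_int (x $ i) \<and> real_of_int (x $ i) < r}"

definition unit_steps :: "(int ^ 'd::finite) set" where
  "unit_steps = {v. \<exists>i. v = axis i 1 \<or> v = axis i (-1)}"

definition step_pmf :: "(int ^ 'd::finite) pmf" where
  "step_pmf = pmf_of_set unit_steps"

definition steps_space :: "(int ^ 'd::finite) stream measure" where
  "steps_space = stream_space (measure_pmf step_pmf)"

definition walk_pos :: "int ^ 'd::finite \<Rightarrow> (int ^ 'd) stream \<Rightarrow> nat \<Rightarrow> int ^ 'd" where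
  "walk_pos x s n = x + (\<Sum>k<n. s !! k)"

definition walk_range :: "int ^ 'd::finite \<Rightarrow> (int ^ 'd) stream \<Rightarrow> (int ^ 'd) set" where
  "walk_range x s = range (walk_pos x s)"

definition escape_prob :: "(int ^ 'd::finite) set \<Rightarrow> int ^ 'd \<Rightarrow> real" where
  "escape_prob K x = measure steps_space {s \<in> space steps_space. \<forall>n>0. walk_pos x s n \<notin> K}"

definition equilibrium :: "(int ^ 'd::finite) set \<Rightarrow> int ^ 'd \<Rightarrow> real" where
  "equilibrium K x = (if x \<in> K then escape_prob K x else 0)"

definition cap :: "(int ^ 'd::finite) set \<Rightarrow> real" where
  "cap K = (\<Sum>x\<in>K. equilibrium K x)"

definition norm_equilibrium :: "(int ^ 'd::finite) set \<Rightarrow> (int ^ 'd) pmf" where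
  "norm_equilibrium K = embed_pmf (\<lambda>x. equilibrium K x / cap K)"

definition L_scale :: "real \<Rightarrow> real \<Rightarrow> real" where
  "L_scale \<epsilon> u = u powr (2 * \<epsilon>) / sqrt u"

text \<open>Law of the collection W_u: a Poisson(u cap(B(2L_u))) number N of paths, together with
  an i.i.d. sequence of (starting point, increments) pairs, the start drawn from the normalized
  equilibrium measure of B(2L_u); W_u consists of the first N of them. Given N, these N paths are
  i.i.d. simple random walks started from the normalized equilibrium measure.\<close>
definition W_space :: "'d::finite itself \<Rightarrow> real \<Rightarrow> real \<Rightarrow>
    (nat \<times> ((int ^ 'd) \<times> (int ^ 'd) stream) stream) measure" where
  "W_space _ \<epsilon> u =
     (let B = (box_Zd (2 * L_scale \<epsilon> u) :: (int ^ 'd) set) in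
      measure_pmf (poisson_pmf (u * cap B)) \<Otimes>\<^sub>M
      stream_space (measure_pmf (norm_equilibrium B) \<Otimes>\<^sub>M (steps_space :: (int ^ 'd) stream measure)))"

definition C_event :: "'d::finite itself \<Rightarrow> real \<Rightarrow> real \<Rightarrow>
    (nat \<times> ((int ^ 'd) \<times> (int ^ 'd) stream) stream) set" where
  "C_event _ \<epsilon> u =
     (let B = (box_Zd (2 * L_scale \<epsilon> u) :: (int ^ 'd) set) in
      {(N, ws). \<forall>i<N. cap (walk_range (fst (ws !! i)) (snd (ws !! i)) \<inter> B)
                         < u powr (-2 * \<epsilon>) * (L_scale \<epsilon> u)\<^sup>2})"

definition prob_C :: "'d::finite itself \<Rightarrow> real \<Rightarrow> real \<Rightarrow> real" where
  "prob_C T \<epsilon> u = measure (W_space T \<epsilon> u) (C_event T \<epsilon> u)"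

end

theory Submission
  imports Defs
begin

text \<open>
  For \<open>d \<ge> 4\<close> and \<open>a = 4 L\<^sup>2 + d\<close>, the function \<open>F y = 1 + a / (a + |y|\<^sup>2)\<close> is decreased by the
  transition operator \<open>P\<close> of simple random walk, by an amount of order \<open>1 / L\<^sup>2\<close> inside the box
  \<open>B = B(2L)\<close>; so \<open>exp (\<mu> 1\<^sub>B) P F \<le> F\<close> with \<open>\<mu> \<asymp> 1 / L\<^sup>2\<close>, and
  \<open>exp (\<mu> \<cdot> (time spent in B)) F(X\<^sub>n)\<close> is a supermartingale. As \<open>cap K \<le> |K|\<close>, a single walk
  therefore has \<open>cap (range \<inter> B) \<ge> T\<close> with probability at most \<open>2 exp (- \<mu> T)\<close>, which for
  \<open>T = u\<^sup>-\<^sup>2\<^sup>\<epsilon> L\<^sub>u\<^sup>2\<close> is at most \<open>2 exp (- c u\<^sup>-\<^sup>\<epsilon>)\<close>. A union bound over the Poisson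
  number of walks, whose mean \<open>u cap B \<le> u |B|\<close> is polynomial in \<open>u\<^sup>-\<^sup>\<epsilon>\<close>, gives the claim.
  The Poisson law requires \<open>cap B > 0\<close>: a walk started far away avoids \<open>B\<close> with positive
  probability, since \<open>1 / (a + |y|\<^sup>2)\<close> is superharmonic, and such a start is reached from a
  point of \<open>B\<close> along a straight path.
\<close>

section \<open>Simple random walk\<close>

lemma axis_component: "(axis i c :: 'a::zero ^ 'n::finite) $ j = (if j = i then c else 0)"
  by (simp add: axis_def)

lemma unit_steps_eq_image:
  "(unit_steps :: (int ^ 'd::finite) set) = (\<lambda>(i, \<sigma>). axis i \<sigma>) ` (UNIV \<times> {1, -1})"
  unfolding unit_steps_def by auto

lemma inj_on_axis_signs: "inj_on (\<lambda>(i, \<sigma>). axis i \<sigma> :: int ^ 'd::finite) (UNIV \<times> {1, -1})"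
  by (auto intro!: inj_onI simp: axis_eq_axis)

lemma finite_unit_steps: "finite (unit_steps :: (int ^ 'd::finite) set)"
  unfolding unit_steps_eq_image by simp

lemma unit_steps_nonempty: "(unit_steps :: (int ^ 'd::finite) set) \<noteq> {}"
  unfolding unit_steps_eq_image by auto

lemma card_unit_steps: "card (unit_steps :: (int ^ 'd::finite) set) = 2 * CARD('d)"
  unfolding unit_steps_eq_image
  by (simp add: card_image[OF inj_on_axis_signs] card_cartesian_product)

lemma sum_unit_steps:
  "(\<Sum>e\<in>(unit_steps :: (int ^ 'd::finite) set). g e) = (\<Sum>i\<in>UNIV. g (axis i 1) + g (axis i (-1)))"
proof -
  have "(\<Sum>e\<in>(unit_steps :: (int ^ 'd) set). g e) = (\<Sum>(i, \<sigma>)\<in>UNIV \<times> {1, -1}. g (axis i \<sigma>))"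
    unfolding unit_steps_eq_image by (subst sum.reindex[OF inj_on_axis_signs]) (simp add: case_prod_unfold)
  also have "\<dots> = (\<Sum>i\<in>UNIV. \<Sum>\<sigma>\<in>{1, -1::int}. g (axis i \<sigma>))"
    unfolding sum.cartesian_product by simp
  finally show ?thesis by simp
qed

definition neighbour_mean :: "(int ^ 'd::finite \<Rightarrow> real) \<Rightarrow> int ^ 'd \<Rightarrow> real" where
  "neighbour_mean F x = (\<Sum>i\<in>UNIV. F (x + axis i 1) + F (x + axis i (-1))) / (2 * CARD('d))"

lemma neighbour_mean_cmult: "neighbour_mean (\<lambda>y. c * F y) x = c * neighbour_mean F x"
  unfolding neighbour_mean_def by (simp add: sum_distrib_left distrib_left)

lemma nn_integral_step_pmf:
  fixes F :: "int ^ 'd::finite \<Rightarrow> real"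
  assumes "\<And>y. 0 \<le> F y"
  shows "(\<integral>\<^sup>+e. ennreal (F (x + e)) \<partial>measure_pmf step_pmf) = ennreal (neighbour_mean F x)"
proof -
  have "(\<integral>\<^sup>+e. ennreal (F (x + e)) \<partial>measure_pmf step_pmf)
      = (\<Sum>e\<in>unit_steps. ennreal (F (x + e))) / card (unit_steps :: (int ^ 'd) set)"
    unfolding step_pmf_def by (rule nn_integral_pmf_of_set[OF unit_steps_nonempty finite_unit_steps])
  also have "\<dots> = ennreal ((\<Sum>e\<in>unit_steps. F (x + e)) / (2 * CARD('d)))"
    using assms by (simp add: card_unit_steps sum_ennreal ennreal_of_nat_eq_real_of_nat divide_ennreal sum_nonneg)
  finally show ?thesis
    by (simp add: sum_unit_steps neighbour_mean_def)
qed

lemma le_nn_integral_step_pmf: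
  assumes "e \<in> (unit_steps :: (int ^ 'd::finite) set)"
  shows "f e \<le> of_nat (2 * CARD('d)) * (\<integral>\<^sup>+t. f t \<partial>measure_pmf (step_pmf :: (int ^ 'd) pmf))"
proof -
  have "(\<integral>\<^sup>+t. f t \<partial>measure_pmf (step_pmf :: (int ^ 'd) pmf)) = sum f unit_steps / of_nat (2 * CARD('d))"
    unfolding step_pmf_def card_unit_steps[symmetric]
    by (rule nn_integral_pmf_of_set[OF unit_steps_nonempty finite_unit_steps])
  then have "of_nat (2 * CARD('d)) * (\<integral>\<^sup>+t. f t \<partial>measure_pmf (step_pmf :: (int ^ 'd) pmf)) = sum f unit_steps"
    by (simp add: ennreal_times_divide mult.commute[of "of_nat (2 * CARD('d))"] mult_divide_eq_ennreal
        del: of_nat_mult)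
  moreover have "f e \<le> sum f unit_steps"
    using assms finite_unit_steps by (intro member_le_sum) auto
  ultimately show ?thesis by simp
qed

lemma prob_space_steps_space: "prob_space (steps_space :: (int ^ 'd::finite) stream measure)"
  unfolding steps_space_def by (rule prob_space.prob_space_stream_space) (rule prob_space_measure_pmf)

lemma space_steps_space [simp]: "space (steps_space :: (int ^ 'd::finite) stream measure) = UNIV"
  unfolding steps_space_def by (simp add: space_stream_space)

lemma sets_steps_space_Collect:
  assumes "Measurable.pred (steps_space :: (int ^ 'd::finite) stream measure) P"
  shows "{s. P s} \<in> sets steps_space"
  using predE[OF assms] by simp

lemma emeasure_steps_space_Cons:
  assumes "X \<in> sets (steps_space :: (int ^ 'd::finite) stream measure)"
  shows "emeasure steps_space X = (\<integral>\<^sup>+e. emeasure steps_space {s. e ## s \<in> X} \<partial>measure_pmf step_pmf)"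
  using prob_space.emeasure_stream_space[OF prob_space_measure_pmf assms[unfolded steps_space_def]]
  unfolding steps_space_def[symmetric] by simp

lemma nn_integral_steps_space_Cons:
  assumes "f \<in> borel_measurable (steps_space :: (int ^ 'd::finite) stream measure)"
  shows "(\<integral>\<^sup>+s. f s \<partial>steps_space) = (\<integral>\<^sup>+e. (\<integral>\<^sup>+s. f (e ## s) \<partial>steps_space) \<partial>measure_pmf step_pmf)"
  using prob_space.nn_integral_stream_space[OF prob_space_measure_pmf assms[unfolded steps_space_def]]
  unfolding steps_space_def[symmetric] by simp

lemma walk_pos_0 [simp]: "walk_pos x s 0 = x"
  by (simp add: walk_pos_def)

lemma walk_pos_Cons: "walk_pos x (e ## s) (Suc n) = walk_pos (x + e) s n"
  unfolding walk_pos_def sum.lessThan_Suc_shift by (simp add: add.assoc)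

lemma walk_pos_stake_eq:
  assumes "stake n s = stake n t" "k \<le> n"
  shows "walk_pos x s k = walk_pos x t k"
proof -
  have "s !! j = t !! j" if "j < n" for j
    using arg_cong[OF assms(1), of "\<lambda>l. l ! j"] that by simp
  then show ?thesis
    unfolding walk_pos_def using assms(2) by (intro arg_cong[where f = "(+) x"] sum.cong) auto
qed

text \<open>Such an \<open>f\<close> factors through \<open>stake n\<close>, which takes values in a countable space.\<close>
lemma measurable_stake_determined:
  assumes "\<And>s t. stake n s = stake n t \<Longrightarrow> f s = f t" and "\<And>s. f s \<in> space N"
  shows "f \<in> measurable (steps_space :: (int ^ 'd::finite) stream measure) N"
proof -
  have "sets (steps_space :: (int ^ 'd) stream measure) = sets (stream_space (count_space UNIV))"
    unfolding steps_space_def by (rule sets_stream_space_cong) simp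
  then have "stake n \<in> measurable (steps_space :: (int ^ 'd) stream measure) (count_space UNIV)"
    using measurable_stake[where 'a = "int ^ 'd"] measurable_cong_sets by blast
  moreover have "(\<lambda>l. f (l @- sconst undefined)) \<in> measurable (count_space UNIV) N"
    using assms(2) by simp
  ultimately have "(\<lambda>l. f (l @- sconst undefined)) \<circ> stake n \<in> measurable steps_space N"
    by (rule measurable_comp)
  moreover have "(\<lambda>l. f (l @- sconst undefined)) \<circ> stake n = f"
    by (rule ext, simp, rule assms(1)) (simp add: stake_shift)
  ultimately show ?thesis
    by simp
qed

lemma measurable_walk_pos [measurable]:
  "(\<lambda>s. walk_pos x s k) \<in> measurable (steps_space :: (int ^ 'd::finite) stream measure) (count_space UNIV)"
  by (rule measurable_stake_determined[of k]) (auto intro: walk_pos_stake_eq[OF _ order_refl])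

section \<open>Exponential moments of occupation times\<close>

definition occupation :: "(int ^ 'd::finite) set \<Rightarrow> int ^ 'd \<Rightarrow> (int ^ 'd) stream \<Rightarrow> nat \<Rightarrow> nat" where
  "occupation B x s n = (\<Sum>k<n. if walk_pos x s k \<in> B then 1 else 0)"

lemma occupation_0 [simp]: "occupation B x s 0 = 0"
  by (simp add: occupation_def)

lemma occupation_Cons:
  "occupation B x (e ## s) (Suc n) = (if x \<in> B then 1 else 0) + occupation B (x + e) s n"
  unfolding occupation_def sum.lessThan_Suc_shift by (simp add: walk_pos_Cons)

lemma occupation_mono: "m \<le> n \<Longrightarrow> occupation B x s m \<le> occupation B x s n"
  unfolding occupation_def by (rule sum_mono2) auto

lemma occupation_eq_card: "occupation B x s n = card {k\<in>{..<n}. walk_pos x s k \<in> B}"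
  unfolding occupation_def by (simp add: sum.If_cases lessThan_def Collect_conj_eq)

lemma occupation_stake_eq:
  assumes "stake n s = stake n t"
  shows "occupation B x s n = occupation B x t n"
  unfolding occupation_def using walk_pos_stake_eq[OF assms] by (intro sum.cong) auto

lemma measurable_occupation_walk_pos:
  assumes "\<And>k y. H k y \<in> space N"
  shows "(\<lambda>s. H (occupation B x s n) (walk_pos x s n))
           \<in> measurable (steps_space :: (int ^ 'd::finite) stream measure) N"
proof (rule measurable_stake_determined[of n])
  fix s t :: "(int ^ 'd) stream"
  assume "stake n s = stake n t"
  then show "H (occupation B x s n) (walk_pos x s n) = H (occupation B x t n) (walk_pos x t n)"
    using occupation_stake_eq walk_pos_stake_eq[OF _ order_refl] by metis
qed (rule assms)

lemma card_range_inter_le_occupation: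
  assumes "finite B"
  obtains n where "card (walk_range x s \<inter> B) \<le> occupation B x s n"
proof -
  define R where "R = walk_range x s \<inter> B"
  have "\<forall>y\<in>R. \<exists>k. walk_pos x s k = y"
    unfolding R_def walk_range_def by auto
  then obtain f where f: "\<forall>y\<in>R. walk_pos x s (f y) = y"
    by (rule bchoice[THEN exE])
  have "finite (f ` R)"
    unfolding R_def using assms by simp
  then obtain n where n: "f ` R \<subseteq> {..<n}"
    using finite_nat_bounded by blast
  have "R \<subseteq> walk_pos x s ` {k\<in>{..<n}. walk_pos x s k \<in> B}"
  proof
    fix y assume "y \<in> R"
    then have "f y < n" "walk_pos x s (f y) = y" "y \<in> B"
      using f n unfolding R_def by auto
    then show "y \<in> walk_pos x s ` {k\<in>{..<n}. walk_pos x s k \<in> B}"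
      by (intro image_eqI[of _ _ "f y"]) auto
  qed
  then have "card R \<le> card (walk_pos x s ` {k\<in>{..<n}. walk_pos x s k \<in> B})"
    by (intro card_mono) auto
  also have "\<dots> \<le> occupation B x s n"
    unfolding occupation_eq_card by (rule card_image_le) simp
  finally show ?thesis
    unfolding R_def by (rule that)
qed

lemma nn_integral_exp_occupation_le:
  fixes F :: "int ^ 'd::finite \<Rightarrow> real"
  assumes F_nonneg: "\<And>y. 0 \<le> F y"
    and F_super: "\<And>y. exp (\<mu> * indicator B y) * neighbour_mean F y \<le> F y"
  shows "(\<integral>\<^sup>+s. ennreal (exp (\<mu> * real (occupation B x s n)) * F (walk_pos x s n)) \<partial>steps_space)
           \<le> ennreal (F x)"
proof (induction n arbitrary: x)
  case 0
  interpret prob_space "steps_space :: (int ^ 'd) stream measure"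
    by (rule prob_space_steps_space)
  show ?case
    using emeasure_space_1 by simp
next
  case (Suc n)
  define c where "c = exp (\<mu> * indicator B x)"
  define G where "G y s = ennreal (exp (\<mu> * real (occupation B y s n)) * F (walk_pos y s n))" for y s
  have c_nonneg: "0 \<le> c" unfolding c_def by simp
  have G_meas: "G y \<in> borel_measurable steps_space" for y
    unfolding G_def by (rule measurable_occupation_walk_pos) simp
  have "(\<integral>\<^sup>+s. ennreal (exp (\<mu> * real (occupation B x s (Suc n))) * F (walk_pos x s (Suc n))) \<partial>steps_space)
      = (\<integral>\<^sup>+e. (\<integral>\<^sup>+s. ennreal c * G (x + e) s \<partial>steps_space) \<partial>measure_pmf step_pmf)"
    by (subst nn_integral_steps_space_Cons, rule measurable_occupation_walk_pos, simp)
      (simp add: occupation_Cons walk_pos_Cons G_def c_def indicator_def F_nonneg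
        ennreal_mult[symmetric] exp_add distrib_left mult.assoc)
  also have "\<dots> = (\<integral>\<^sup>+e. ennreal c * (\<integral>\<^sup>+s. G (x + e) s \<partial>steps_space) \<partial>measure_pmf step_pmf)"
    by (simp add: nn_integral_cmult G_meas)
  also have "\<dots> \<le> (\<integral>\<^sup>+e. ennreal (c * F (x + e)) \<partial>measure_pmf step_pmf)"
    using Suc.IH c_nonneg F_nonneg
    by (intro nn_integral_mono) (simp add: G_def ennreal_mult mult_left_mono)
  also have "\<dots> = ennreal (c * neighbour_mean F x)"
    using c_nonneg F_nonneg by (subst nn_integral_step_pmf[of "\<lambda>y. c * F y" x]) (simp_all add: neighbour_mean_cmult)
  also have "\<dots> \<le> ennreal (F x)"
    using F_super[of x] by (simp add: c_def ennreal_leI)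
  finally show ?case .
qed

lemma sets_occupation_ge: "{s. T \<le> real (occupation B x s n)} \<in> sets steps_space"
  by (rule sets_steps_space_Collect, rule measurable_occupation_walk_pos[where H = "\<lambda>k y. T \<le> real k"]) simp

lemma emeasure_occupation_ge_le:
  fixes F :: "int ^ 'd::finite \<Rightarrow> real"
  assumes F_ge_1: "\<And>y. 1 \<le> F y"
    and F_super: "\<And>y. exp (\<mu> * indicator B y) * neighbour_mean F y \<le> F y"
    and "0 \<le> \<mu>"
  shows "emeasure steps_space {s. T \<le> real (occupation B x s n)} \<le> ennreal (exp (- \<mu> * T) * F x)"
proof -
  define E where "E = {s. T \<le> real (occupation B x s n)}"
  define u where "u s = ennreal (exp (\<mu> * real (occupation B x s n)) * F (walk_pos x s n))" for s
  have F_nonneg: "0 \<le> F y" for y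
    using F_ge_1[of y] by linarith
  have "indicator E s \<le> ennreal (exp (- \<mu> * T)) * u s" for s
  proof (cases "s \<in> E")
    case True
    then have "1 \<le> exp (- \<mu> * T + \<mu> * real (occupation B x s n))"
      using \<open>0 \<le> \<mu>\<close> unfolding E_def by (simp add: mult_left_mono)
    also have "\<dots> \<le> exp (- \<mu> * T + \<mu> * real (occupation B x s n)) * F (walk_pos x s n)"
      using F_ge_1 by simp
    finally have "1 \<le> exp (- \<mu> * T) * (exp (\<mu> * real (occupation B x s n)) * F (walk_pos x s n))"
      by (simp only: exp_add mult.assoc)
    then show ?thesis
      unfolding u_def using True F_nonneg by (simp add: ennreal_mult[symmetric] ennreal_leI)
  qed simp
  then have "emeasure steps_space E \<le> (\<integral>\<^sup>+s. ennreal (exp (- \<mu> * T)) * u s \<partial>steps_space)"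
    unfolding E_def by (simp add: nn_integral_indicator[symmetric] sets_occupation_ge nn_integral_mono
      del: nn_integral_indicator)
  also have "\<dots> = ennreal (exp (- \<mu> * T)) * (\<integral>\<^sup>+s. u s \<partial>steps_space)"
    unfolding u_def by (rule nn_integral_cmult) (rule measurable_occupation_walk_pos, simp)
  also have "\<dots> \<le> ennreal (exp (- \<mu> * T)) * ennreal (F x)"
    unfolding u_def by (intro mult_left_mono nn_integral_exp_occupation_le F_nonneg F_super) simp
  finally show ?thesis
    unfolding E_def by (simp add: ennreal_mult F_nonneg)
qed

lemma emeasure_card_range_inter_ge_le:
  fixes F :: "int ^ 'd::finite \<Rightarrow> real"
  assumes F_ge_1: "\<And>y. 1 \<le> F y"
    and F_super: "\<And>y. exp (\<mu> * indicator B y) * neighbour_mean F y \<le> F y"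
    and "0 \<le> \<mu>" and "finite B"
    and S_sub: "S \<subseteq> {s. T \<le> real (card (walk_range x s \<inter> B))}"
  shows "emeasure steps_space S \<le> ennreal (exp (- \<mu> * T) * F x)"
proof -
  define E where "E n = {s. T \<le> real (occupation B x s n)}" for n
  have E_sets: "E n \<in> sets steps_space" for n
    unfolding E_def by (rule sets_occupation_ge)
  have "incseq E"
  proof (rule incseq_SucI, rule subsetI)
    fix n s assume "s \<in> E n"
    then have "T \<le> real (occupation B x s n)"
      by (simp add: E_def)
    also have "\<dots> \<le> real (occupation B x s (Suc n))"
      using occupation_mono[of n "Suc n"] by simp
    finally show "s \<in> E (Suc n)"
      by (simp add: E_def)
  qed
  have card_sub: "{s. T \<le> real (card (walk_range x s \<inter> B))} \<subseteq> (\<Union>n. E n)"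
  proof
    fix s assume "s \<in> {s. T \<le> real (card (walk_range x s \<inter> B))}"
    moreover obtain n where "card (walk_range x s \<inter> B) \<le> occupation B x s n"
      using card_range_inter_le_occupation \<open>finite B\<close> by blast
    ultimately have "T \<le> real (occupation B x s n)"
      by (metis mem_Collect_eq of_nat_le_iff order_trans)
    then show "s \<in> (\<Union>n. E n)"
      unfolding E_def by blast
  qed
  have "emeasure steps_space S \<le> emeasure steps_space (\<Union>n. E n)"
    using S_sub card_sub E_sets by (intro emeasure_mono) auto
  also have "\<dots> = (SUP n. emeasure steps_space (E n))"
    using E_sets \<open>incseq E\<close> by (intro SUP_emeasure_incseq[symmetric]) auto
  also have "\<dots> \<le> ennreal (exp (- \<mu> * T) * F x)"
    unfolding E_def by (intro SUP_least emeasure_occupation_ge_le F_ge_1 F_super \<open>0 \<le> \<mu>\<close>)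
  finally show ?thesis .
qed

section \<open>The inverse-square potential\<close>

definition sqnorm :: "int ^ 'd::finite \<Rightarrow> real" where
  "sqnorm x = (\<Sum>i\<in>UNIV. (real_of_int (x $ i))\<^sup>2)"

lemma sqnorm_nonneg: "0 \<le> sqnorm x"
  unfolding sqnorm_def by (auto intro: sum_nonneg)

lemma component_sq_le_sqnorm: "(real_of_int (x $ i))\<^sup>2 \<le> sqnorm x"
  unfolding sqnorm_def by (rule member_le_sum) auto

lemma sqnorm_add_axis:
  fixes x :: "int ^ 'd::finite" and c :: int
  shows "sqnorm (x + axis i c) = sqnorm x + 2 * real_of_int c * real_of_int (x $ i) + (real_of_int c)\<^sup>2"
proof -
  have "sqnorm (x + axis i c) = (\<Sum>j\<in>UNIV. (real_of_int (x $ j))\<^sup>2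
      + (if j = i then 2 * real_of_int c * real_of_int (x $ j) + (real_of_int c)\<^sup>2 else 0))"
    unfolding sqnorm_def by (rule sum.cong) (auto simp: axis_component power2_eq_square algebra_simps)
  then show ?thesis
    unfolding sqnorm_def by (simp add: sum.distrib)
qed

lemma sqnorm_le_box:
  fixes x :: "int ^ 'd::finite" and r :: real
  assumes "x \<in> box_Zd r"
  shows "sqnorm x \<le> real CARD('d) * r\<^sup>2"
proof -
  have "(real_of_int (x $ i))\<^sup>2 \<le> r\<^sup>2" for i
  proof -
    have "- r \<le> real_of_int (x $ i)" "real_of_int (x $ i) < r"
      using assms unfolding box_Zd_def by auto
    then have "\<bar>real_of_int (x $ i)\<bar> \<le> \<bar>r\<bar>"
      by linarith
    then show ?thesis
      by (simp add: abs_le_square_iff)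
  qed
  then have "sqnorm x \<le> (\<Sum>i\<in>(UNIV :: 'd set). r\<^sup>2)"
    unfolding sqnorm_def by (intro sum_mono)
  then show ?thesis
    by simp
qed

lemma inverse_sub_add_inverse_sub_le:
  fixes A x y :: real
  assumes "0 \<le> x" "0 \<le> y" "x + y < A"
  shows "1 / (A - x) + 1 / (A - y) \<le> 1 / A + 1 / (A - x - y)"
proof -
  have "1 / (A - x) - 1 / A = x / (A * (A - x))"
    using assms by (simp add: field_simps)
  also have "\<dots> \<le> x / ((A - y) * (A - x - y))"
    using assms by (intro divide_left_mono mult_mono mult_pos_pos) auto
  also have "\<dots> = 1 / (A - x - y) - 1 / (A - y)"
    using assms by (simp add: field_simps)
  finally show ?thesis by simp
qed

lemma sum_inverse_sub_le:
  fixes t :: "'i \<Rightarrow> real" and A :: real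
  assumes "finite I" "\<And>i. i \<in> I \<Longrightarrow> 0 \<le> t i" "sum t I < A"
  shows "(\<Sum>i\<in>I. 1 / (A - t i) - 1 / A) \<le> 1 / (A - sum t I) - 1 / A"
  using assms
proof (induction I rule: finite_induct)
  case (insert j I)
  have "0 \<le> t j" "0 \<le> sum t I"
    using insert.prems(1) by (auto intro: sum_nonneg)
  moreover have "t j + sum t I < A"
    using insert.prems(2) insert.hyps by simp
  ultimately have "sum t I < A"
    by linarith
  then have "(\<Sum>i\<in>I. 1 / (A - t i) - 1 / A) \<le> 1 / (A - sum t I) - 1 / A"
    using insert.IH insert.prems(1) by blast
  then show ?case
    using insert.hyps inverse_sub_add_inverse_sub_le[of "t j" "sum t I" A] \<open>0 \<le> t j\<close>
      \<open>0 \<le> sum t I\<close> \<open>t j + sum t I < A\<close> by (simp add: algebra_simps)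
qed simp

text \<open>For \<open>m = sqnorm x\<close> and \<open>D = d\<close> this inequality is where \<open>d \<ge> 4\<close> enters:
  the numerator below is \<open>(D - 4) r\<^sup>2 + \<dots>\<close>.\<close>
lemma inverse_potential_drift_ineq:
  fixes D a m :: real
  assumes "4 \<le> D" "D \<le> a" "0 \<le> m"
  shows "(D - 1) / (D * (a + m + 1)) + (a + m + 1) / (D * ((a + m + 1)\<^sup>2 - 4 * m))
           \<le> 1 / (a + m) - 2 * a / (D * (a + m + 1) ^ 3)"
proof -
  define r where "r = a + m"
  define q where "q = r + 1"
  define Q where "Q = (r - 1)\<^sup>2 + 4 * a"
  have Q_eq: "q\<^sup>2 - 4 * m = Q"
    unfolding Q_def q_def r_def by (simp add: power2_eq_square algebra_simps)
  have pos: "0 < r" "0 < q" "0 < Q" "0 < D"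
    using assms unfolding r_def q_def Q_def by (auto intro: add_nonneg_pos)
  have "1 / r - (D - 1) / (D * q) - q / (D * Q) - 2 * a / (D * q * Q)
      = (D * q * Q - (D - 1) * r * Q - q * q * r - 2 * a * r) / (D * r * q * Q)"
    using pos by (simp add: field_simps)
  also have "D * q * Q - (D - 1) * r * Q - q * q * r - 2 * a * r
      = (D - 4) * r\<^sup>2 + (2 * a - 2 * D) * r + D * (1 + 4 * a)"
    unfolding Q_def q_def by (simp add: power2_eq_square algebra_simps)
  finally have "0 \<le> 1 / r - (D - 1) / (D * q) - q / (D * Q) - 2 * a / (D * q * Q)"
    using assms pos by simp
  moreover have "2 * a / (D * q ^ 3) \<le> 2 * a / (D * q * Q)"
    using pos assms Q_eq by (intro divide_left_mono mult_pos_pos)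
      (auto simp: power3_eq_cube power2_eq_square)
  ultimately show ?thesis
    unfolding q_def[symmetric] r_def[symmetric] Q_eq by linarith
qed

lemma inverse_sqnorm_axis_pair:
  fixes x :: "int ^ 'd::finite" and a :: real
  assumes "0 < a"
  defines "q \<equiv> a + sqnorm x + 1"
  shows "1 / (a + sqnorm (x + axis i 1)) + 1 / (a + sqnorm (x + axis i (-1)))
           = 2 * q / (q\<^sup>2 - 4 * (real_of_int (x $ i))\<^sup>2)"
proof -
  define t where "t = real_of_int (x $ i)"
  have "t\<^sup>2 \<le> sqnorm x"
    unfolding t_def by (rule component_sq_le_sqnorm)
  then have "a + (\<bar>t\<bar> - 1)\<^sup>2 \<le> q - 2 * \<bar>t\<bar>"
    unfolding q_def by (simp add: power2_eq_square algebra_simps)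
  moreover have "0 < a + (\<bar>t\<bar> - 1)\<^sup>2"
    using assms by (simp add: add_pos_nonneg)
  ultimately have pos: "0 < q + 2 * t" "0 < q - 2 * t"
    by linarith+
  have plus: "a + sqnorm (x + axis i 1) = q + 2 * t"
    and minus: "a + sqnorm (x + axis i (-1)) = q - 2 * t"
    unfolding sqnorm_add_axis q_def t_def by simp_all
  have factor: "q\<^sup>2 - 4 * t\<^sup>2 = (q + 2 * t) * (q - 2 * t)"
    by (simp add: power2_eq_square algebra_simps)
  show ?thesis
    unfolding plus minus t_def[symmetric] factor using pos by (simp add: field_simps)
qed

lemma neighbour_mean_inverse_sqnorm_le:
  fixes x :: "int ^ 'd::finite" and a :: real
  assumes "4 \<le> CARD('d)" and "real CARD('d) \<le> a"
  shows "neighbour_mean (\<lambda>y. 1 / (a + sqnorm y)) x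
           \<le> 1 / (a + sqnorm x) - 2 * a / (real CARD('d) * (a + sqnorm x + 1) ^ 3)"
proof -
  define D where "D = real CARD('d)"
  define m where "m = sqnorm x"
  define q where "q = a + m + 1"
  define t where "t i = 4 * (real_of_int (x $ i))\<^sup>2" for i
  have "4 \<le> D" "0 < D" "0 < a" "0 \<le> m"
    using assms sqnorm_nonneg unfolding D_def m_def by auto
  then have "0 < q"
    unfolding q_def by simp
  have sum_t: "sum t UNIV = 4 * m"
    unfolding t_def m_def sqnorm_def by (simp add: sum_distrib_left)
  have "q\<^sup>2 - 4 * m = (a + m - 1)\<^sup>2 + 4 * a"
    unfolding q_def by (simp add: power2_eq_square algebra_simps)
  then have "4 * m < q\<^sup>2"
    using \<open>0 < a\<close> by (smt (verit) zero_le_power2)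
  have pair: "1 / (a + sqnorm (x + axis i 1)) + 1 / (a + sqnorm (x + axis i (-1))) = 2 * q * (1 / (q\<^sup>2 - t i))" for i
    unfolding inverse_sqnorm_axis_pair[OF \<open>0 < a\<close>] q_def m_def t_def by simp
  have "(\<Sum>i\<in>UNIV. 1 / (q\<^sup>2 - t i) - 1 / q\<^sup>2) \<le> 1 / (q\<^sup>2 - 4 * m) - 1 / q\<^sup>2"
    using sum_inverse_sub_le[of UNIV t "q\<^sup>2"] \<open>4 * m < q\<^sup>2\<close> sum_t by (simp add: t_def)
  then have "(\<Sum>i\<in>UNIV. 1 / (q\<^sup>2 - t i)) \<le> 1 / (q\<^sup>2 - 4 * m) - 1 / q\<^sup>2 + D / q\<^sup>2"
    unfolding D_def by (simp add: sum_subtractf)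
  then have "2 * q * (\<Sum>i\<in>UNIV. 1 / (q\<^sup>2 - t i)) / (2 * D)
      \<le> 2 * q * (1 / (q\<^sup>2 - 4 * m) - 1 / q\<^sup>2 + D / q\<^sup>2) / (2 * D)"
    using \<open>0 < q\<close> \<open>0 < D\<close> by (intro divide_right_mono mult_left_mono) auto
  also have "\<dots> = (D - 1) / (D * q) + q / (D * (q\<^sup>2 - 4 * m))"
    using \<open>0 < q\<close> \<open>0 < D\<close> \<open>4 * m < q\<^sup>2\<close> by (simp add: field_simps power2_eq_square)
  also have "\<dots> \<le> 1 / (a + m) - 2 * a / (D * q ^ 3)"
    unfolding q_def using inverse_potential_drift_ineq[OF \<open>4 \<le> D\<close> _ \<open>0 \<le> m\<close>, of a] assms(2)
    unfolding D_def by simp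
  finally show ?thesis
    unfolding neighbour_mean_def pair sum_distrib_left[symmetric] of_nat_mult of_nat_numeral
      D_def[symmetric] m_def[symmetric] q_def[symmetric] .
qed

section \<open>Boxes and capacity\<close>

lemma bij_betw_vec_nth_cube:
  "bij_betw vec_nth {x :: 'a ^ 'n::finite. \<forall>i. x $ i \<in> I} (PiE UNIV (\<lambda>_. I))"
  by (intro bij_betwI[of _ _ _ vec_lambda]) (auto simp: vec_eq_iff PiE_def extensional_def)

lemma finite_cube:
  assumes "finite I"
  shows "finite {x :: 'a ^ 'n::finite. \<forall>i. x $ i \<in> I}"
proof -
  have "finite (PiE (UNIV :: 'n set) (\<lambda>_. I))"
    using assms by (intro finite_PiE) auto
  then show ?thesis
    using bij_betw_finite[OF bij_betw_vec_nth_cube] by blast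
qed

lemma card_cube:
  assumes "finite I"
  shows "card {x :: 'a ^ 'n::finite. \<forall>i. x $ i \<in> I} = card I ^ CARD('n)"
proof -
  have "card {x :: 'a ^ 'n. \<forall>i. x $ i \<in> I} = card (PiE (UNIV :: 'n set) (\<lambda>_. I))"
    by (rule bij_betw_same_card[OF bij_betw_vec_nth_cube])
  also have "\<dots> = card I ^ CARD('n)"
    by (subst card_PiE) auto
  finally show ?thesis .
qed

lemma box_Zd_subset_cube: "box_Zd r \<subseteq> {x :: int ^ 'd::finite. \<forall>i. x $ i \<in> {-\<lceil>r\<rceil>..<\<lceil>r\<rceil>}}"
proof (intro subsetI CollectI allI)
  fix x :: "int ^ 'd" and i
  assume "x \<in> box_Zd r"
  then have "- r \<le> real_of_int (x $ i)" "real_of_int (x $ i) < r"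
    unfolding box_Zd_def by auto
  then have "-\<lceil>r\<rceil> \<le> x $ i" "x $ i < \<lceil>r\<rceil>"
    by linarith+
  then show "x $ i \<in> {-\<lceil>r\<rceil>..<\<lceil>r\<rceil>}"
    by simp
qed

lemma finite_box_Zd: "finite (box_Zd r :: (int ^ 'd::finite) set)"
  by (rule finite_subset[OF box_Zd_subset_cube finite_cube]) simp

lemma card_box_Zd_le:
  fixes r :: real
  assumes "0 \<le> r"
  shows "real (card (box_Zd r :: (int ^ 'd::finite) set)) \<le> (2 * r + 2) ^ CARD('d)"
proof -
  have "card (box_Zd r :: (int ^ 'd) set) \<le> card {x :: int ^ 'd. \<forall>i. x $ i \<in> {-\<lceil>r\<rceil>..<\<lceil>r\<rceil>}}"
    by (rule card_mono[OF finite_cube box_Zd_subset_cube]) simp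
  also have "\<dots> = nat (2 * \<lceil>r\<rceil>) ^ CARD('d)"
    by (subst card_cube) auto
  finally have "real (card (box_Zd r :: (int ^ 'd) set)) \<le> real (nat (2 * \<lceil>r\<rceil>)) ^ CARD('d)"
    by (metis of_nat_le_iff of_nat_power)
  also have "\<dots> \<le> (2 * r + 2) ^ CARD('d)"
  proof (rule power_mono)
    have "real (nat (2 * \<lceil>r\<rceil>)) = 2 * real_of_int \<lceil>r\<rceil>"
      using assms by simp
    then show "real (nat (2 * \<lceil>r\<rceil>)) \<le> 2 * r + 2"
      by linarith
  qed simp
  finally show ?thesis .
qed

lemma escape_prob_nonneg: "0 \<le> escape_prob K x"
  unfolding escape_prob_def by simp

lemma escape_prob_le_1: "escape_prob K x \<le> 1"
proof -
  interpret prob_space "steps_space :: (int ^ 'd::finite) stream measure"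
    by (rule prob_space_steps_space)
  show ?thesis
    unfolding escape_prob_def by simp
qed

lemma cap_le_card: "cap (K :: (int ^ 'd::finite) set) \<le> real (card K)"
proof -
  have "cap K \<le> (\<Sum>x\<in>K. 1)"
    unfolding cap_def equilibrium_def by (intro sum_mono) (simp add: escape_prob_le_1)
  then show ?thesis by simp
qed

section \<open>A single walk in a box\<close>

definition lyapunov :: "real \<Rightarrow> int ^ 'd::finite \<Rightarrow> real" where
  "lyapunov a y = 1 + a / (a + sqnorm y)"

lemma lyapunov_ge_1: "0 < a \<Longrightarrow> 1 \<le> lyapunov a y"
  unfolding lyapunov_def using sqnorm_nonneg[of y] by simp

lemma lyapunov_le_2: "0 < a \<Longrightarrow> lyapunov a y \<le> 2"
  unfolding lyapunov_def using sqnorm_nonneg[of y] by simp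

lemma neighbour_mean_affine:
  fixes F :: "int ^ 'd::finite \<Rightarrow> real" and b c :: real
  shows "neighbour_mean (\<lambda>y. c + b * F y) x = c + b * neighbour_mean F x"
proof -
  have "real (2 * CARD('d)) \<noteq> 0"
    by simp
  moreover have "(\<Sum>i\<in>UNIV. c + b * F (x + axis i 1) + (c + b * F (x + axis i (-1))))
      = real (2 * CARD('d)) * c + b * (\<Sum>i\<in>UNIV. F (x + axis i 1) + F (x + axis i (-1)))"
    by (simp add: sum.distrib sum_distrib_left algebra_simps)
  ultimately show ?thesis
    unfolding neighbour_mean_def by (simp add: add_divide_distrib)
qed

lemma neighbour_mean_lyapunov_le:
  fixes y :: "int ^ 'd::finite" and a :: real
  assumes "4 \<le> CARD('d)" "real CARD('d) \<le> a"
  shows "neighbour_mean (lyapunov a) y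
           \<le> lyapunov a y - 2 * a\<^sup>2 / (real CARD('d) * (a + sqnorm y + 1) ^ 3)"
proof -
  have "0 < a"
    using assms by simp
  have lyapunov_eq: "lyapunov a = (\<lambda>y. 1 + a * (1 / (a + sqnorm y)))"
    by (simp add: lyapunov_def fun_eq_iff)
  have "neighbour_mean (lyapunov a) y = 1 + a * neighbour_mean (\<lambda>y. 1 / (a + sqnorm y)) y"
    unfolding lyapunov_eq by (rule neighbour_mean_affine)
  also have "\<dots> \<le> 1 + a * (1 / (a + sqnorm y) - 2 * a / (real CARD('d) * (a + sqnorm y + 1) ^ 3))"
    using neighbour_mean_inverse_sqnorm_le[OF assms] \<open>0 < a\<close> by (simp add: mult_left_mono)
  also have "\<dots> = lyapunov a y - 2 * a\<^sup>2 / (real CARD('d) * (a + sqnorm y + 1) ^ 3)"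
    unfolding lyapunov_def by (simp add: algebra_simps power2_eq_square)
  finally show ?thesis .
qed

lemma sqnorm_le_in_box:
  fixes y :: "int ^ 'd::finite" and L :: real
  assumes "y \<in> box_Zd (2 * L)"
  shows "sqnorm y \<le> real CARD('d) * (4 * L\<^sup>2 + real CARD('d))"
proof -
  have "sqnorm y \<le> real CARD('d) * (2 * L)\<^sup>2"
    using sqnorm_le_box[OF assms] .
  also have "\<dots> \<le> real CARD('d) * (4 * L\<^sup>2 + real CARD('d))"
    by (intro mult_left_mono) (auto simp: power2_eq_square)
  finally show ?thesis .
qed

lemma lyapunov_decrement_in_box:
  fixes y :: "int ^ 'd::finite" and L :: real
  assumes "y \<in> box_Zd (2 * L)"
  defines "D \<equiv> real CARD('d)"
  defines "a \<equiv> 4 * L\<^sup>2 + D"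
  shows "2 / (8 * D * (D + 1) ^ 3 * a) \<le> 2 * a\<^sup>2 / (D * (a + sqnorm y + 1) ^ 3)"
proof -
  define E where "E = D + 1"
  have "1 \<le> D" "D \<le> a" "0 \<le> sqnorm y"
    unfolding D_def a_def by (simp_all add: sqnorm_nonneg)
  then have "0 < D" "0 < a" "0 < E" "0 \<le> D * a"
    unfolding E_def by simp_all
  have cube: "D * (2 * E * a) ^ 3 = a\<^sup>2 * (8 * D * E ^ 3 * a)"
    by (simp add: power_mult_distrib power2_eq_square power3_eq_cube algebra_simps)
  have "sqnorm y \<le> D * a"
    using sqnorm_le_in_box[OF assms(1)] unfolding D_def a_def .
  then have "a + sqnorm y + 1 \<le> 2 * (D * a) + 2 * a"
    using \<open>1 \<le> D\<close> \<open>D \<le> a\<close> \<open>0 \<le> D * a\<close> by linarith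
  also have "\<dots> = 2 * E * a"
    unfolding E_def by (simp add: algebra_simps)
  finally have "a + sqnorm y + 1 \<le> 2 * E * a" .
  then have "(a + sqnorm y + 1) ^ 3 \<le> (2 * E * a) ^ 3"
    using \<open>0 \<le> sqnorm y\<close> \<open>0 < a\<close> by (intro power_mono) auto
  then have "2 * a\<^sup>2 / (D * (2 * E * a) ^ 3) \<le> 2 * a\<^sup>2 / (D * (a + sqnorm y + 1) ^ 3)"
    using \<open>0 < D\<close> \<open>0 < a\<close> \<open>0 < E\<close> \<open>0 \<le> sqnorm y\<close>
    by (intro divide_left_mono mult_pos_pos mult_left_mono) auto
  moreover have "2 * a\<^sup>2 / (D * (2 * E * a) ^ 3) = 2 / (8 * D * E ^ 3 * a)"
    using \<open>0 < a\<close> \<open>0 < D\<close> \<open>0 < E\<close> by (simp only: cube) (simp add: field_simps)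
  ultimately show ?thesis
    unfolding E_def by simp
qed

lemma exp_indicator_neighbour_mean_lyapunov_le:
  fixes y :: "int ^ 'd::finite" and L :: real
  assumes "4 \<le> CARD('d)"
  defines "a \<equiv> 4 * L\<^sup>2 + real CARD('d)"
  defines "\<mu> \<equiv> 1 / (8 * real CARD('d) * (real CARD('d) + 1) ^ 3 * a)"
  shows "exp (\<mu> * indicator (box_Zd (2 * L)) y) * neighbour_mean (lyapunov a) y \<le> lyapunov a y"
proof -
  have "real CARD('d) \<le> a" "0 < a" "0 \<le> \<mu>"
    unfolding \<mu>_def a_def by (simp_all add: add_nonneg_pos)
  define \<delta> where "\<delta> = 2 * a\<^sup>2 / (real CARD('d) * (a + sqnorm y + 1) ^ 3)"
  have decrement: "neighbour_mean (lyapunov a) y \<le> lyapunov a y - \<delta>"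
    unfolding \<delta>_def by (rule neighbour_mean_lyapunov_le[OF assms(1) \<open>real CARD('d) \<le> a\<close>])
  show ?thesis
  proof (cases "y \<in> box_Zd (2 * L)")
    case False
    have "0 \<le> \<delta>"
      unfolding \<delta>_def using \<open>0 < a\<close> sqnorm_nonneg[of y] by simp
    with False decrement show ?thesis
      by simp
  next
    case True
    have "2 * \<mu> \<le> \<delta>"
      using lyapunov_decrement_in_box[OF True] unfolding \<delta>_def \<mu>_def a_def by simp
    moreover have "lyapunov a y * \<mu> \<le> 2 * \<mu>"
      using lyapunov_le_2[OF \<open>0 < a\<close>, of y] \<open>0 \<le> \<mu>\<close> by (rule mult_right_mono)
    ultimately have "neighbour_mean (lyapunov a) y \<le> lyapunov a y - lyapunov a y * \<mu>"
      using decrement by linarith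
    also have "\<dots> = lyapunov a y * (1 - \<mu>)"
      by (simp add: algebra_simps)
    also have "\<dots> \<le> lyapunov a y * exp (- \<mu>)"
      using lyapunov_ge_1[OF \<open>0 < a\<close>, of y] exp_ge_add_one_self[of "- \<mu>"]
      by (intro mult_left_mono) auto
    finally have "exp \<mu> * neighbour_mean (lyapunov a) y \<le> exp \<mu> * (lyapunov a y * exp (- \<mu>))"
      by (rule mult_left_mono) simp
    also have "\<dots> = lyapunov a y"
      by (simp add: mult.left_commute exp_minus_inverse)
    finally show ?thesis
      using True by simp
  qed
qed

lemma emeasure_cap_range_inter_box_ge_le:
  fixes x :: "int ^ 'd::finite" and L T :: real
  assumes "4 \<le> CARD('d)"
  defines "\<mu> \<equiv> 1 / (8 * real CARD('d) * (real CARD('d) + 1) ^ 3 * (4 * L\<^sup>2 + real CARD('d)))"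
  shows "emeasure steps_space {s. T \<le> cap (walk_range x s \<inter> box_Zd (2 * L))}
           \<le> ennreal (2 * exp (- \<mu> * T))"
proof -
  define a where "a = 4 * L\<^sup>2 + real CARD('d)"
  have "0 < a" "0 \<le> \<mu>"
    unfolding a_def \<mu>_def by (simp_all add: add_nonneg_pos)
  have "emeasure steps_space {s. T \<le> cap (walk_range x s \<inter> box_Zd (2 * L))}
      \<le> ennreal (exp (- \<mu> * T) * lyapunov a x)"
  proof (rule emeasure_card_range_inter_ge_le)
    show "1 \<le> lyapunov a y" for y
      using \<open>0 < a\<close> by (rule lyapunov_ge_1)
    show "exp (\<mu> * indicator (box_Zd (2 * L)) y) * neighbour_mean (lyapunov a) y \<le> lyapunov a y"
      for y :: "int ^ 'd"
      using exp_indicator_neighbour_mean_lyapunov_le[OF assms(1), where y = y and L = L]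
      unfolding \<mu>_def a_def by simp
    show "{s. T \<le> cap (walk_range x s \<inter> box_Zd (2 * L))}
        \<subseteq> {s. T \<le> real (card (walk_range x s \<inter> box_Zd (2 * L)))}"
      using cap_le_card by (auto intro: order_trans)
  qed (simp_all add: \<open>0 \<le> \<mu>\<close> finite_box_Zd)
  also have "\<dots> \<le> ennreal (2 * exp (- \<mu> * T))"
    using lyapunov_le_2[OF \<open>0 < a\<close>, of x] by (intro ennreal_leI) simp
  finally show ?thesis .
qed

section \<open>The capacity of a box is positive\<close>

lemma emeasure_hits_before_le:
  fixes h :: "int ^ 'd::finite \<Rightarrow> real"
  assumes h_super: "\<And>y. neighbour_mean h y \<le> h y" and h_nonneg: "\<And>y. 0 \<le> h y"
    and h_ge: "\<And>y. y \<in> B \<Longrightarrow> c \<le> h y" and "0 < c"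
  shows "emeasure steps_space {s. \<exists>k<n. walk_pos y s k \<in> B} \<le> ennreal (h y / c)"
proof (induction n arbitrary: y)
  case (Suc n)
  show ?case
  proof (cases "y \<in> B")
    case True
    interpret prob_space "steps_space :: (int ^ 'd) stream measure"
      by (rule prob_space_steps_space)
    have "emeasure steps_space {s. \<exists>k<Suc n. walk_pos y s k \<in> B} \<le> ennreal 1"
      by (simp add: emeasure_le_1)
    also have "\<dots> \<le> ennreal (h y / c)"
      using h_ge[OF True] \<open>0 < c\<close> by (intro ennreal_leI) simp
    finally show ?thesis .
  next
    case False
    have "{s. \<exists>k<Suc n. walk_pos y s k \<in> B} \<in> sets steps_space"
      by (rule sets_steps_space_Collect) measurable
    then have "emeasure steps_space {s. \<exists>k<Suc n. walk_pos y s k \<in> B}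
        = (\<integral>\<^sup>+e. emeasure steps_space {s. \<exists>k<n. walk_pos (y + e) s k \<in> B} \<partial>measure_pmf step_pmf)"
      using False by (simp add: emeasure_steps_space_Cons Ex_less_Suc2 walk_pos_Cons)
    also have "\<dots> \<le> (\<integral>\<^sup>+e. ennreal (h (y + e) / c) \<partial>measure_pmf step_pmf)"
      by (intro nn_integral_mono Suc.IH)
    also have "\<dots> = ennreal (neighbour_mean h y / c)"
      using nn_integral_step_pmf[of "\<lambda>y. h y / c" y] neighbour_mean_cmult[of "1 / c" h y]
        h_nonneg \<open>0 < c\<close> by simp
    also have "\<dots> \<le> ennreal (h y / c)"
      using h_super[of y] \<open>0 < c\<close> by (intro ennreal_leI divide_right_mono) auto
    finally show ?thesis .
  qed
qed simp

lemma emeasure_hits_le: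
  fixes h :: "int ^ 'd::finite \<Rightarrow> real"
  assumes "\<And>y. neighbour_mean h y \<le> h y" "\<And>y. 0 \<le> h y" "\<And>y. y \<in> B \<Longrightarrow> c \<le> h y" "0 < c"
  shows "emeasure steps_space {s. \<exists>k. walk_pos y s k \<in> B} \<le> ennreal (h y / c)"
proof -
  define H where "H n = {s. \<exists>k<n. walk_pos y s k \<in> B}" for n
  have "{s. \<exists>k. walk_pos y s k \<in> B} = (\<Union>n. H n)"
    unfolding H_def by (auto intro: lessI)
  moreover have "incseq H"
    unfolding H_def by (rule incseq_SucI) (auto intro: less_SucI)
  moreover have "H n \<in> sets steps_space" for n
    unfolding H_def by (rule sets_steps_space_Collect) measurable
  ultimately have "emeasure steps_space {s. \<exists>k. walk_pos y s k \<in> B} = (SUP n. emeasure steps_space (H n))"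
    by (simp add: SUP_emeasure_incseq image_subset_iff)
  also have "\<dots> \<le> ennreal (h y / c)"
    unfolding H_def by (intro SUP_least emeasure_hits_before_le assms)
  finally show ?thesis .
qed

definition avoid_prob :: "(int ^ 'd::finite) set \<Rightarrow> int ^ 'd \<Rightarrow> ennreal" where
  "avoid_prob B z = emeasure steps_space {s. \<forall>k. walk_pos z s k \<notin> B}"

lemma avoid_prob_pos:
  fixes h :: "int ^ 'd::finite \<Rightarrow> real"
  assumes "\<And>y. neighbour_mean h y \<le> h y" "\<And>y. 0 \<le> h y" "\<And>y. y \<in> B \<Longrightarrow> c \<le> h y" "0 < c"
    and "h z < c"
  shows "0 < avoid_prob B z"
proof -
  interpret prob_space "steps_space :: (int ^ 'd) stream measure"
    by (rule prob_space_steps_space)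
  have hits: "{s. \<exists>k. walk_pos z s k \<in> B} \<in> sets steps_space"
    by (rule sets_steps_space_Collect) measurable
  have "measure steps_space {s. \<exists>k. walk_pos z s k \<in> B} \<le> h z / c"
    using emeasure_hits_le[OF assms(1-4), where y = z] assms(2)[of z] \<open>0 < c\<close>
    by (simp add: emeasure_eq_measure ennreal_le_iff)
  moreover have "h z / c < 1"
    using \<open>h z < c\<close> \<open>0 < c\<close> by simp
  ultimately have "0 < measure steps_space (space steps_space - {s. \<exists>k. walk_pos z s k \<in> B})"
    using prob_compl[OF hits] by simp
  moreover have "space steps_space - {s. \<exists>k. walk_pos z s k \<in> B} = {s. \<forall>k. walk_pos z s k \<notin> B}"
    by auto
  ultimately show ?thesis
    unfolding avoid_prob_def by (simp add: emeasure_eq_measure)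
qed

lemma avoid_prob_step_le:
  assumes "z \<notin> B" "e \<in> unit_steps"
  shows "avoid_prob B (z + e) \<le> of_nat (2 * CARD('d)) * avoid_prob B (z :: int ^ 'd::finite)"
proof -
  have "{s. \<forall>k. walk_pos z s k \<notin> B} \<in> sets steps_space"
    by (rule sets_steps_space_Collect) measurable
  moreover have "(\<forall>k. walk_pos z (t ## s) k \<notin> B) \<longleftrightarrow> (\<forall>k. walk_pos (z + t) s k \<notin> B)" for t s
    using assms(1) by (metis walk_pos_0 walk_pos_Cons not0_implies_Suc)
  ultimately have "avoid_prob B z = (\<integral>\<^sup>+t. avoid_prob B (z + t) \<partial>measure_pmf step_pmf)"
    unfolding avoid_prob_def by (simp add: emeasure_steps_space_Cons)
  then show ?thesis
    using le_nn_integral_step_pmf[OF assms(2), of "\<lambda>t. avoid_prob B (z + t)"] by simp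
qed

lemma avoid_prob_le_escape:
  assumes "e \<in> unit_steps"
  shows "avoid_prob B (x + e)
           \<le> of_nat (2 * CARD('d)) * emeasure steps_space {s. \<forall>n>0. walk_pos (x :: int ^ 'd::finite) s n \<notin> B}"
proof -
  have "{s. \<forall>n>0. walk_pos x s n \<notin> B} \<in> sets steps_space"
    by (rule sets_steps_space_Collect) measurable
  moreover have "(\<forall>n>0. walk_pos x (t ## s) n \<notin> B) \<longleftrightarrow> (\<forall>k. walk_pos (x + t) s k \<notin> B)" for t s
    by (metis gr0_implies_Suc walk_pos_Cons zero_less_Suc)
  ultimately have "emeasure steps_space {s. \<forall>n>0. walk_pos x s n \<notin> B}
      = (\<integral>\<^sup>+t. avoid_prob B (x + t) \<partial>measure_pmf step_pmf)"
    unfolding avoid_prob_def by (simp add: emeasure_steps_space_Cons)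
  then show ?thesis
    using le_nn_integral_step_pmf[OF assms, of "\<lambda>t. avoid_prob B (x + t)"] by simp
qed

text \<open>A walk that avoids \<open>B\<close> from the far end of a straight path leaving \<open>B\<close> at \<open>p 0\<close> can be
  prefixed by the steps of the path, each costing at most a factor \<open>2d\<close>.\<close>
lemma escape_prob_pos_of_path:
  fixes p :: "nat \<Rightarrow> int ^ 'd::finite"
  assumes "e \<in> unit_steps" "\<And>j. p (Suc j) = p j + e" "\<And>j. 0 < j \<Longrightarrow> p j \<notin> B"
    and "0 < n" "0 < avoid_prob B (p n)"
  shows "0 < escape_prob B (p 0)"
proof -
  have chain: "avoid_prob B (p (Suc k)) \<le> of_nat (2 * CARD('d)) ^ k * avoid_prob B (p 1)" for k
  proof (induction k)
    case (Suc k)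
    have "avoid_prob B (p (Suc (Suc k))) = avoid_prob B (p (Suc k) + e)"
      using assms(2)[of "Suc k"] by simp
    also have "\<dots> \<le> of_nat (2 * CARD('d)) * avoid_prob B (p (Suc k))"
      by (rule avoid_prob_step_le[OF assms(3) assms(1)]) simp
    also have "\<dots> \<le> of_nat (2 * CARD('d)) * (of_nat (2 * CARD('d)) ^ k * avoid_prob B (p 1))"
      by (rule mult_left_mono[OF Suc.IH]) simp
    finally show ?case
      by (simp add: mult.assoc)
  qed simp
  have pos_factor: "0 < z" if "0 < y" "y \<le> x * z" for x y z :: ennreal
    using that by (cases "z = 0") (auto simp: zero_less_iff_neq_zero)
  obtain k where "n = Suc k"
    using \<open>0 < n\<close> gr0_implies_Suc by blast
  then have "0 < avoid_prob B (p (Suc k))"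
    using assms(5) by simp
  then have "0 < avoid_prob B (p 1)"
    using chain[of k] by (rule pos_factor)
  moreover have "avoid_prob B (p 1)
      \<le> of_nat (2 * CARD('d)) * emeasure steps_space {s. \<forall>n>0. walk_pos (p 0) s n \<notin> B}"
    using avoid_prob_le_escape[OF assms(1)] assms(2)[of 0] by simp
  ultimately have escape_pos: "0 < emeasure steps_space {s. \<forall>n>0. walk_pos (p 0) s n \<notin> B}"
    by (rule pos_factor)
  interpret prob_space "steps_space :: (int ^ 'd) stream measure"
    by (rule prob_space_steps_space)
  show ?thesis
    using escape_pos unfolding escape_prob_def by (simp add: emeasure_eq_measure)
qed

lemma avoid_prob_box_Zd_pos:
  fixes z :: "int ^ 'd::finite" and L :: real
  assumes "4 \<le> CARD('d)"
  defines "a \<equiv> 4 * L\<^sup>2 + real CARD('d)"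
  assumes "real CARD('d) * a < sqnorm z"
  shows "0 < avoid_prob (box_Zd (2 * L)) z"
proof -
  define D where "D = real CARD('d)"
  define h where "h y = 1 / (a + sqnorm y)" for y :: "int ^ 'd"
  define c where "c = 1 / ((D + 1) * a)"
  have "0 < D" "D \<le> a"
    unfolding D_def a_def by simp_all
  then have "0 < a" "0 < c"
    unfolding c_def by simp_all
  show ?thesis
  proof (rule avoid_prob_pos)
    show "0 \<le> h y" for y
      unfolding h_def using \<open>0 < a\<close> sqnorm_nonneg[of y] by simp
    show "neighbour_mean h y \<le> h y" for y
    proof -
      have "0 \<le> 2 * a / (D * (a + sqnorm y + 1) ^ 3)"
        using \<open>0 < a\<close> \<open>0 < D\<close> sqnorm_nonneg[of y] by simp
      then show ?thesis
        using neighbour_mean_inverse_sqnorm_le[OF assms(1), where a = a and x = y] \<open>D \<le> a\<close>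
        unfolding h_def D_def by simp
    qed
    show "c \<le> h y" if "y \<in> box_Zd (2 * L)" for y
    proof -
      have "sqnorm y \<le> D * a"
        using sqnorm_le_in_box[OF that] unfolding D_def a_def .
      then have "a + sqnorm y \<le> (D + 1) * a"
        by (simp add: algebra_simps)
      then show ?thesis
        unfolding h_def c_def using \<open>0 < a\<close> sqnorm_nonneg[of y] by (intro divide_left_mono) auto
    qed
    have "(D + 1) * a < a + sqnorm z"
      using assms(3) unfolding D_def by (simp add: algebra_simps)
    then show "h z < c"
      unfolding h_def c_def using \<open>0 < a\<close> \<open>0 < D\<close> sqnorm_nonneg[of z]
      by (intro divide_strict_left_mono) (auto intro: mult_pos_pos add_pos_nonneg)
  qed (rule \<open>0 < c\<close>)
qed

lemma box_Zd_exit_path: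
  fixes L :: real and p :: "nat \<Rightarrow> int ^ 'd::finite"
  assumes "0 < L" and p_def: "\<And>j. p j = axis i (\<lceil>2 * L\<rceil> - 1 + int j)"
  shows "p 0 \<in> box_Zd (2 * L)" and "\<And>j. 0 < j \<Longrightarrow> p j \<notin> box_Zd (2 * L)"
    and "\<And>j. p (Suc j) = p j + axis i 1" and "\<And>j. (real j)\<^sup>2 \<le> sqnorm (p j)"
proof -
  define M where "M = \<lceil>2 * L\<rceil> - 1"
  have component: "real_of_int (p j $ i') = (if i' = i then real_of_int M + real j else 0)" for j i'
    unfolding p_def M_def by (simp add: axis_component)
  have "0 \<le> M"
    unfolding M_def using \<open>0 < L\<close> by simp
  then have "0 \<le> real_of_int M" "real_of_int M < 2 * L"
    unfolding M_def by linarith+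
  then show "p 0 \<in> box_Zd (2 * L)"
    using \<open>0 < L\<close> unfolding box_Zd_def by (auto simp: component)
  show "p j \<notin> box_Zd (2 * L)" if "0 < j" for j
  proof
    assume "p j \<in> box_Zd (2 * L)"
    then have "real_of_int M + real j < 2 * L"
      unfolding box_Zd_def by (auto simp: component dest: spec[of _ i])
    then show False
      using that unfolding M_def by linarith
  qed
  show "p (Suc j) = p j + axis i 1" for j
    unfolding p_def by (simp add: vec_eq_iff axis_component)
  show "(real j)\<^sup>2 \<le> sqnorm (p j)" for j
  proof -
    have "(real j)\<^sup>2 \<le> (real_of_int M + real j)\<^sup>2"
      using \<open>0 \<le> real_of_int M\<close> by (intro power_mono) auto
    also have "\<dots> \<le> sqnorm (p j)"
      using component_sq_le_sqnorm[of "p j" i] by (simp add: component)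
    finally show ?thesis .
  qed
qed

lemma cap_box_Zd_pos:
  assumes "4 \<le> CARD('d::finite)" "0 < L"
  shows "0 < cap (box_Zd (2 * L) :: (int ^ 'd) set)"
proof -
  define B where "B = (box_Zd (2 * L) :: (int ^ 'd) set)"
  define K where "K = nat \<lceil>real CARD('d) * (4 * L\<^sup>2 + real CARD('d))\<rceil> + 1"
  fix i :: 'd
  define p where "p j = (axis i (\<lceil>2 * L\<rceil> - 1 + int j) :: int ^ 'd)" for j
  note path = box_Zd_exit_path[OF assms(2) p_def, folded B_def]
  have X_nonneg: "0 \<le> real CARD('d) * (4 * L\<^sup>2 + real CARD('d))"
    by simp
  have "real CARD('d) * (4 * L\<^sup>2 + real CARD('d)) < real K"
    using real_nat_ceiling_ge[of "real CARD('d) * (4 * L\<^sup>2 + real CARD('d))"]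
    unfolding K_def of_nat_add of_nat_1 by linarith
  also have "\<dots> \<le> (real K)\<^sup>2"
    by (intro self_le_power) (simp_all add: K_def, use X_nonneg in linarith)
  also have "\<dots> \<le> sqnorm (p K)"
    by (rule path(4))
  finally have "0 < avoid_prob B (p K)"
    unfolding B_def by (rule avoid_prob_box_Zd_pos[OF assms(1)])
  then have "0 < escape_prob B (p 0)"
    using path(2,3) by (intro escape_prob_pos_of_path[where e = "axis i 1" and n = K])
      (auto simp: unit_steps_def K_def)
  also have "escape_prob B (p 0) = equilibrium B (p 0)"
    using path(1) by (simp add: equilibrium_def)
  also have "\<dots> \<le> cap B"
    unfolding cap_def using path(1)
    by (rule member_le_sum) (simp_all add: equilibrium_def escape_prob_nonneg B_def finite_box_Zd)
  finally show ?thesis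
    unfolding B_def .
qed

section \<open>Union bound over a Poisson number of walks\<close>

lemma distr_stream_space_snth:
  assumes "prob_space M"
  shows "distr (stream_space M) M (\<lambda>\<omega>. \<omega> !! i) = M"
proof -
  have "distr (stream_space M) M (\<lambda>\<omega>. \<omega> !! i) = distr (\<Pi>\<^sub>M j\<in>UNIV. M) M ((\<lambda>\<omega>. \<omega> !! i) \<circ> to_stream)"
    by (subst stream_space_eq_distr) (simp add: distr_distr)
  also have "\<dots> = distr (\<Pi>\<^sub>M j\<in>UNIV. M) M (\<lambda>X. X i)"
    by (simp add: comp_def to_stream_def)
  also have "\<dots> = M"
    using assms by (intro distr_PiM_component) simp_all
  finally show ?thesis .
qed

lemma emeasure_stream_space_snth:
  assumes "prob_space M" "A \<in> sets M"
  shows "emeasure (stream_space M) ((\<lambda>\<omega>. \<omega> !! i) -` A \<inter> space (stream_space M)) = emeasure M A"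
  using emeasure_distr[OF measurable_snth assms(2), of i] distr_stream_space_snth[OF assms(1)] by simp

lemma nn_integral_poisson_pmf_mean:
  assumes "0 < r"
  shows "(\<integral>\<^sup>+N. ennreal (real N) \<partial>measure_pmf (poisson_pmf r)) = ennreal r"
proof -
  define f where "f N = real N * (r ^ N / fact N * exp (- r))" for N
  have f_Suc: "f (Suc n) = r * (r ^ n / fact n) * exp (- r)" for n
    unfolding f_def by (simp add: field_simps del: of_nat_Suc)
  have "(\<lambda>n. r ^ n / fact n) sums exp r"
    using exp_converges[of r] by (simp add: divide_inverse mult.commute)
  then have "(\<lambda>n. f (Suc n)) sums (r * exp r * exp (- r))"
    unfolding f_Suc by (intro sums_mult2 sums_mult)
  then have "f sums r"
    using sums_Suc[of f] by (simp add: f_def exp_minus field_simps)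
  moreover have "0 \<le> f N" for N
    unfolding f_def using assms by simp
  moreover have "(\<integral>\<^sup>+N. ennreal (real N) \<partial>measure_pmf (poisson_pmf r)) = (\<Sum>N. ennreal (f N))"
    unfolding nn_integral_measure_pmf f_def nn_integral_count_space_nat[symmetric] using assms
    by (intro nn_integral_cong) (simp add: ennreal_mult[symmetric] mult.commute)
  ultimately show ?thesis
    by (simp add: suminf_ennreal2 sums_iff)
qed

text \<open>The expected number \<open>r \<cdot> Q G\<close> of the first \<open>N\<close> samples that fall into \<open>G\<close> bounds the
  probability that one of them does.\<close>
lemma measure_poisson_stream_avoids_ge:
  fixes Q :: "'a measure"
  assumes Q: "prob_space Q" and G: "G \<in> sets Q" and "0 < r" "0 \<le> p" "emeasure Q G \<le> ennreal p"
  defines "W \<equiv> measure_pmf (poisson_pmf r) \<Otimes>\<^sub>M stream_space Q"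
  shows "1 - r * p \<le> measure W {\<omega>\<in>space W. \<forall>i<fst \<omega>. snd \<omega> !! i \<notin> G}"
proof -
  define S where "S = stream_space Q"
  define X where "X i = (\<lambda>\<omega>. \<omega> !! i) -` G \<inter> space S" for i
  interpret S: prob_space S
    unfolding S_def by (rule prob_space.prob_space_stream_space[OF Q])
  interpret W: prob_space W
    unfolding W_def S_def[symmetric] by (intro prob_space_pair prob_space_measure_pmf S.prob_space_axioms)
  have X_sets: "X i \<in> sets S" for i
    unfolding X_def S_def using G by measurable
  have bad_eq: "{\<omega>\<in>space W. \<exists>i<fst \<omega>. snd \<omega> !! i \<in> G} = (\<Union>i. {i<..} \<times> X i)"
    unfolding W_def X_def S_def by (auto simp: space_pair_measure)
  have bad_sets: "(\<Union>i. {i<..} \<times> X i) \<in> sets W"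
    unfolding W_def S_def[symmetric] using X_sets by (intro sets.countable_UN pair_measureI) auto
  have union_le: "emeasure S (\<Union>i<N. X i) \<le> of_nat N * ennreal p" for N
  proof -
    have "emeasure S (\<Union>i<N. X i) \<le> (\<Sum>i<N. emeasure S (X i))"
      using X_sets by (intro emeasure_subadditive_finite) auto
    also have "\<dots> \<le> (\<Sum>i<N. ennreal p)"
      unfolding X_def S_def using emeasure_stream_space_snth[OF Q G] assms(5)
      by (intro sum_mono) simp
    finally show ?thesis by simp
  qed
  have vimage_eq: "Pair N -` (\<Union>i. {i<..} \<times> X i) = (\<Union>i<N. X i)" for N
    by auto
  have "emeasure W (\<Union>i. {i<..} \<times> X i) = (\<integral>\<^sup>+N. emeasure S (\<Union>i<N. X i) \<partial>measure_pmf (poisson_pmf r))"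
    using bad_sets unfolding W_def S_def[symmetric] by (simp add: S.emeasure_pair_measure_alt vimage_eq)
  also have "\<dots> \<le> (\<integral>\<^sup>+N. ennreal p * ennreal (real N) \<partial>measure_pmf (poisson_pmf r))"
    using union_le by (intro nn_integral_mono) (simp add: mult.commute ennreal_of_nat_eq_real_of_nat)
  also have "\<dots> = ennreal (r * p)"
    using nn_integral_poisson_pmf_mean[OF \<open>0 < r\<close>] \<open>0 \<le> p\<close> \<open>0 < r\<close>
    by (simp add: nn_integral_cmult ennreal_mult mult.commute)
  finally have "measure W (\<Union>i. {i<..} \<times> X i) \<le> r * p"
    unfolding W.emeasure_eq_measure using \<open>0 < r\<close> \<open>0 \<le> p\<close> by simp
  moreover have "{\<omega>\<in>space W. \<forall>i<fst \<omega>. snd \<omega> !! i \<notin> G} = space W - (\<Union>i. {i<..} \<times> X i)"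
    using bad_eq by blast
  ultimately show ?thesis
    using W.prob_compl[OF bad_sets] by simp
qed

lemma measurable_fst_pmf_pair:
  "fst \<in> measurable (measure_pmf \<nu> \<Otimes>\<^sub>M N) (count_space UNIV)"
  using measurable_fst[of "measure_pmf \<nu>" N] by (simp add: measurable_cong_sets)

lemma measurable_walk_pos_pair [measurable]:
  "(\<lambda>p. walk_pos (fst p) (snd p) n)
     \<in> measurable (measure_pmf (\<nu> :: (int ^ 'd::finite) pmf) \<Otimes>\<^sub>M steps_space) (count_space UNIV)"
proof (rule measurable_compose_countable[where f = "\<lambda>x p. walk_pos x (snd p) n" and g = fst])
  show "(\<lambda>p. walk_pos x (snd p) n) \<in> measurable (measure_pmf \<nu> \<Otimes>\<^sub>M steps_space) (count_space UNIV)"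
    for x :: "int ^ 'd"
    by (rule measurable_compose[OF measurable_snd measurable_walk_pos])
qed (rule measurable_fst_pmf_pair)

text \<open>Within a finite \<open>B\<close>, the set \<open>walk_range \<inter> B\<close> is one of finitely many candidates \<open>K\<close>,
  each determined by countably many measurable events.\<close>
lemma pred_cap_range_inter_less:
  fixes B :: "(int ^ 'd::finite) set"
  assumes "finite B"
  shows "Measurable.pred (measure_pmf \<nu> \<Otimes>\<^sub>M steps_space) (\<lambda>p. cap (walk_range (fst p) (snd p) \<inter> B) < thr)"
proof -
  have "cap (walk_range (fst p) (snd p) \<inter> B) < thr \<longleftrightarrow>
      (\<exists>K\<in>Pow B. (\<forall>y\<in>B. y \<in> K \<longleftrightarrow> (\<exists>n. walk_pos (fst p) (snd p) n = y)) \<and> cap K < thr)" for p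
  proof
    assume "\<exists>K\<in>Pow B. (\<forall>y\<in>B. y \<in> K \<longleftrightarrow> (\<exists>n. walk_pos (fst p) (snd p) n = y)) \<and> cap K < thr"
    then obtain K where "K \<subseteq> B" "\<forall>y\<in>B. y \<in> K \<longleftrightarrow> (\<exists>n. walk_pos (fst p) (snd p) n = y)" "cap K < thr"
      by blast
    moreover from this(1,2) have "walk_range (fst p) (snd p) \<inter> B = K"
      unfolding walk_range_def by (auto; metis rangeI subsetD)
    ultimately show "cap (walk_range (fst p) (snd p) \<inter> B) < thr"
      by simp
  qed (auto simp: walk_range_def intro!: bexI[of _ "walk_range (fst p) (snd p) \<inter> B"])
  moreover have "Measurable.pred (measure_pmf \<nu> \<Otimes>\<^sub>M steps_space)
      (\<lambda>p. \<exists>K\<in>Pow B. (\<forall>y\<in>B. y \<in> K \<longleftrightarrow> (\<exists>n. walk_pos (fst p) (snd p) n = y)) \<and> cap K < thr)"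
    using assms finite_Pow_iff[THEN iffD2, OF assms] by measurable
  ultimately show ?thesis
    by simp
qed

lemma measure_all_walks_cap_less_ge:
  fixes B :: "(int ^ 'd::finite) set" and \<nu> :: "(int ^ 'd) pmf"
  assumes "0 < r" "finite B" "0 \<le> p"
    and single: "\<And>x. emeasure steps_space {s. thr \<le> cap (walk_range x s \<inter> B)} \<le> ennreal p"
  shows "1 - r * p \<le> measure (measure_pmf (poisson_pmf r) \<Otimes>\<^sub>M stream_space (measure_pmf \<nu> \<Otimes>\<^sub>M steps_space))
           {(N, ws). \<forall>i<N. cap (walk_range (fst (ws !! i)) (snd (ws !! i)) \<inter> B) < thr}"
proof -
  define Q where "Q = measure_pmf \<nu> \<Otimes>\<^sub>M (steps_space :: (int ^ 'd) stream measure)"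
  define G where "G = {p. thr \<le> cap (walk_range (fst p) (snd p) \<inter> B)}"
  interpret T: prob_space "steps_space :: (int ^ 'd) stream measure"
    by (rule prob_space_steps_space)
  have Q: "prob_space Q"
    unfolding Q_def by (intro prob_space_pair prob_space_measure_pmf T.prob_space_axioms)
  have space_Q: "space Q = UNIV"
    unfolding Q_def by (simp add: space_pair_measure)
  have "Measurable.pred Q (\<lambda>p. \<not> cap (walk_range (fst p) (snd p) \<inter> B) < thr)"
    unfolding Q_def using pred_cap_range_inter_less[OF assms(2), where \<nu> = \<nu> and thr = thr]
    by measurable
  then have G_sets: "G \<in> sets Q"
    using predE space_Q unfolding G_def by (force simp: not_less)
  have "emeasure Q G = (\<integral>\<^sup>+x. emeasure steps_space (Pair x -` G) \<partial>measure_pmf \<nu>)"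
    using G_sets unfolding Q_def by (rule T.emeasure_pair_measure_alt)
  also have "\<dots> \<le> (\<integral>\<^sup>+x. ennreal p \<partial>measure_pmf \<nu>)"
    using single by (intro nn_integral_mono) (simp add: G_def vimage_def)
  finally have "emeasure Q G \<le> ennreal p"
    by (simp add: measure_pmf.emeasure_space_1)
  then have "1 - r * p \<le> measure (measure_pmf (poisson_pmf r) \<Otimes>\<^sub>M stream_space Q)
      {\<omega>\<in>space (measure_pmf (poisson_pmf r) \<Otimes>\<^sub>M stream_space Q). \<forall>i<fst \<omega>. snd \<omega> !! i \<notin> G}"
    by (intro measure_poisson_stream_avoids_ge Q G_sets assms)
  also have "{\<omega>\<in>space (measure_pmf (poisson_pmf r) \<Otimes>\<^sub>M stream_space Q). \<forall>i<fst \<omega>. snd \<omega> !! i \<notin> G}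
      = {(N, ws). \<forall>i<N. cap (walk_range (fst (ws !! i)) (snd (ws !! i)) \<inter> B) < thr}"
    by (auto simp: G_def space_pair_measure space_stream_space space_Q not_le)
  finally show ?thesis
    unfolding Q_def .
qed

lemma prob_C_ge:
  fixes \<epsilon> u :: real
  assumes "4 \<le> CARD('d::finite)" "0 < u"
  defines "L \<equiv> L_scale \<epsilon> u" and "D \<equiv> real CARD('d)"
  shows "1 - u * (4 * L + 2) ^ CARD('d)
               * (2 * exp (- (1 / (8 * D * (D + 1) ^ 3 * (4 * L\<^sup>2 + D))) * (u powr (-2 * \<epsilon>) * L\<^sup>2)))
           \<le> prob_C TYPE('d) \<epsilon> u"
proof -
  define B where "B = (box_Zd (2 * L) :: (int ^ 'd) set)"
  define p where "p = 2 * exp (- (1 / (8 * D * (D + 1) ^ 3 * (4 * L\<^sup>2 + D))) * (u powr (-2 * \<epsilon>) * L\<^sup>2))"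
  have "0 < L"
    unfolding L_def L_scale_def using assms(2) by simp
  have "0 < cap B" "0 \<le> p"
    unfolding B_def p_def using cap_box_Zd_pos[OF assms(1) \<open>0 < L\<close>] by simp_all
  have single: "emeasure steps_space {s. u powr (-2 * \<epsilon>) * L\<^sup>2 \<le> cap (walk_range x s \<inter> B)} \<le> ennreal p"
    for x :: "int ^ 'd"
    using emeasure_cap_range_inter_box_ge_le[OF assms(1), where x = x and L = L and T = "u powr (-2 * \<epsilon>) * L\<^sup>2"]
    unfolding p_def B_def D_def by simp
  have "1 - u * (4 * L + 2) ^ CARD('d) * p \<le> 1 - u * cap B * p"
  proof -
    have "cap B \<le> (2 * (2 * L) + 2) ^ CARD('d)"
      unfolding B_def using \<open>0 < L\<close> by (intro order_trans[OF cap_le_card card_box_Zd_le]) simp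
    then show ?thesis
      using assms(2) \<open>0 \<le> p\<close> by (simp add: mult_left_mono mult_right_mono)
  qed
  also have "\<dots> \<le> prob_C TYPE('d) \<epsilon> u"
    unfolding prob_C_def W_space_def C_event_def Let_def L_def[symmetric] B_def[symmetric]
    using \<open>0 < cap B\<close> assms(2) \<open>0 \<le> p\<close>
    by (intro measure_all_walks_cap_less_ge single) (simp_all add: B_def finite_box_Zd)
  finally show ?thesis
    unfolding p_def by (simp add: mult.assoc)
qed

section \<open>Asymptotics\<close>

lemma power_le_fact_mult_exp:
  fixes v c :: real
  assumes "0 \<le> v" "0 < c"
  shows "v ^ k \<le> fact k * (1 / c) ^ k * exp (c * v)"
proof -
  have "(c * v) ^ k / fact k \<le> (\<Sum>n\<le>k. (c * v) ^ n / fact n)"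
    using assms by (intro member_le_sum) auto
  also have "\<dots> \<le> exp (c * v)"
    using assms summable_exp_generic[of "c * v"]
    by (auto simp: exp_def divide_inverse ac_simps intro!: sum_le_suminf)
  finally have "(1 / c) ^ k * (c * v) ^ k \<le> (1 / c) ^ k * (fact k * exp (c * v))"
    using assms by (intro mult_left_mono) (auto simp: field_simps)
  then show ?thesis
    using assms by (simp add: power_mult_distrib[symmetric] ac_simps)
qed

lemma L_scale_eq_powr: "0 < u \<Longrightarrow> L_scale \<epsilon> u = u powr (2 * \<epsilon> - 1 / 2)"
  unfolding L_scale_def by (simp add: powr_half_sqrt[symmetric] powr_diff)

lemma one_le_powr_of_le_1:
  fixes u a :: real
  assumes "0 < u" "u < 1" "a \<le> 0"
  shows "1 \<le> u powr a"
  using powr_mono'[of a 0 u] assms by simp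

text \<open>With \<open>v = u\<^sup>-\<^sup>\<epsilon>\<close>, the factor \<open>u L\<^sub>u\<^sup>d\<close> is the power \<open>v\<^sup>\<beta>\<close> for the
  exponent \<open>\<beta>\<close> below.\<close>
lemma mult_L_scale_power_le:
  fixes \<epsilon> u :: real and d :: nat
  assumes "0 < \<epsilon>" "0 < u" "u < 1"
  defines "\<beta> \<equiv> ((1 / 2 - 2 * \<epsilon>) * d - 1) / \<epsilon>"
  shows "u * L_scale \<epsilon> u ^ d \<le> (u powr (- \<epsilon>)) ^ nat \<lceil>\<beta>\<rceil>"
proof -
  have "L_scale \<epsilon> u ^ d = (u powr (2 * \<epsilon> - 1 / 2)) powr real d"
    using assms by (simp add: L_scale_eq_powr powr_realpow)
  then have "u * L_scale \<epsilon> u ^ d = u powr 1 * u powr ((2 * \<epsilon> - 1 / 2) * d)"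
    using assms by (simp add: powr_powr)
  also have "\<dots> = u powr (1 + (2 * \<epsilon> - 1 / 2) * d)"
    by (rule powr_add[symmetric])
  also have "1 + (2 * \<epsilon> - 1 / 2) * d = - \<epsilon> * \<beta>"
    unfolding \<beta>_def using assms(1) by (simp add: field_simps)
  also have "u powr (- \<epsilon> * \<beta>) = (u powr (- \<epsilon>)) powr \<beta>"
    by (simp add: powr_powr)
  also have "\<dots> \<le> (u powr (- \<epsilon>)) powr (nat \<lceil>\<beta>\<rceil>)"
    using assms one_le_powr_of_le_1[of u "- \<epsilon>"] by (intro powr_mono) (auto simp: real_nat_ceiling_ge)
  also have "\<dots> = (u powr (- \<epsilon>)) ^ nat \<lceil>\<beta>\<rceil>"
    using assms by (simp add: powr_realpow)
  finally show ?thesis .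
qed

lemma exp_single_walk_exponent_le:
  fixes \<epsilon> u D :: real
  assumes "0 < \<epsilon>" "\<epsilon> < 1 / 4" "0 < u" "u < 1" "0 < D"
  defines "L \<equiv> L_scale \<epsilon> u" and "c \<equiv> 1 / (8 * D * (D + 1) ^ 3 * (4 + D))"
  shows "exp (- (1 / (8 * D * (D + 1) ^ 3 * (4 * L\<^sup>2 + D))) * (u powr (-2 * \<epsilon>) * L\<^sup>2))
           \<le> exp (- c * u powr (- \<epsilon>))"
proof -
  define v where "v = u powr (- \<epsilon>)"
  have "1 \<le> L"
    unfolding L_def using assms by (simp add: L_scale_eq_powr one_le_powr_of_le_1)
  have "1 \<le> v"
    unfolding v_def using assms by (simp add: one_le_powr_of_le_1)
  have "v\<^sup>2 = u powr (-2 * \<epsilon>)"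
    unfolding v_def power2_eq_square powr_add[symmetric] by simp
  have "4 * L\<^sup>2 + D \<le> (4 + D) * L\<^sup>2"
    using \<open>1 \<le> L\<close> \<open>0 < D\<close> mult_left_mono[of 1 "L\<^sup>2" D] by (simp add: algebra_simps one_le_power)
  have "c * v\<^sup>2 = v\<^sup>2 * L\<^sup>2 / (8 * D * (D + 1) ^ 3 * ((4 + D) * L\<^sup>2))"
    using \<open>1 \<le> L\<close> unfolding c_def by (simp add: ac_simps)
  also have "\<dots> \<le> v\<^sup>2 * L\<^sup>2 / (8 * D * (D + 1) ^ 3 * (4 * L\<^sup>2 + D))"
    using \<open>4 * L\<^sup>2 + D \<le> (4 + D) * L\<^sup>2\<close> \<open>1 \<le> L\<close> \<open>0 < D\<close>
    by (intro divide_left_mono mult_left_mono mult_pos_pos) (auto intro: add_pos_nonneg)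
  finally have "c * v\<^sup>2 \<le> v\<^sup>2 * L\<^sup>2 / (8 * D * (D + 1) ^ 3 * (4 * L\<^sup>2 + D))" .
  moreover have "c * v \<le> c * v\<^sup>2"
    using \<open>1 \<le> v\<close> \<open>0 < D\<close> unfolding c_def by (intro mult_left_mono) (auto simp: power2_eq_square)
  ultimately show ?thesis
    unfolding v_def[symmetric] \<open>v\<^sup>2 = u powr (-2 * \<epsilon>)\<close>[symmetric] by simp
qed

lemma union_bound_le_exp:
  fixes \<epsilon> u :: real and d :: nat
  assumes "1 \<le> d" "0 < \<epsilon>" "\<epsilon> < 1 / 4" "0 < u" "u < 1"
  defines "D \<equiv> real d" and "L \<equiv> L_scale \<epsilon> u"
  defines "c \<equiv> 1 / (8 * D * (D + 1) ^ 3 * (4 + D))"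
  defines "k \<equiv> nat \<lceil>((1 / 2 - 2 * \<epsilon>) * d - 1) / \<epsilon>\<rceil>"
  shows "u * (4 * L + 2) ^ d * (2 * exp (- (1 / (8 * D * (D + 1) ^ 3 * (4 * L\<^sup>2 + D))) * (u powr (-2 * \<epsilon>) * L\<^sup>2)))
           \<le> 2 * 6 ^ d * fact k * (2 / c) ^ k * exp (- (c / 2) * u powr (- \<epsilon>))"
proof -
  define v where "v = u powr (- \<epsilon>)"
  have "0 < D" "0 < c" "0 \<le> v"
    unfolding D_def c_def v_def using assms(1) by simp_all
  have "1 \<le> L"
    unfolding L_def using assms by (simp add: L_scale_eq_powr one_le_powr_of_le_1)
  have "u * (4 * L + 2) ^ d \<le> 6 ^ d * (u * L ^ d)"
    using assms(4) \<open>1 \<le> L\<close> power_mono[of "4 * L + 2" "6 * L" d] by (simp add: power_mult_distrib)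
  also have "\<dots> \<le> 6 ^ d * (fact k * (2 / c) ^ k * exp (c / 2 * v))"
    using mult_L_scale_power_le[OF assms(2,4,5), of d] power_le_fact_mult_exp[OF \<open>0 \<le> v\<close>, of "c / 2" k]
      \<open>0 < c\<close> unfolding L_def k_def v_def by simp
  finally have poly: "u * (4 * L + 2) ^ d \<le> 6 ^ d * (fact k * (2 / c) ^ k * exp (c / 2 * v))" .
  have "c / 2 * v + - c * v = - (c / 2) * v"
    by (simp add: field_simps)
  then have exp_halves: "exp (c / 2 * v) * exp (- c * v) = exp (- (c / 2) * v)"
    unfolding mult_exp_exp by simp
  have "u * (4 * L + 2) ^ d * (2 * exp (- (1 / (8 * D * (D + 1) ^ 3 * (4 * L\<^sup>2 + D))) * (u powr (-2 * \<epsilon>) * L\<^sup>2)))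
      \<le> 6 ^ d * (fact k * (2 / c) ^ k * exp (c / 2 * v)) * (2 * exp (- c * v))"
  proof -
    have "exp (- (1 / (8 * D * (D + 1) ^ 3 * (4 * L\<^sup>2 + D))) * (u powr (-2 * \<epsilon>) * L\<^sup>2)) \<le> exp (- c * v)"
      using exp_single_walk_exponent_le[OF assms(2-5) \<open>0 < D\<close>] unfolding L_def c_def v_def .
    with \<open>0 < c\<close> show ?thesis
      by (intro mult_mono[OF poly]) simp_all
  qed
  also have "\<dots> = 2 * 6 ^ d * fact k * (2 / c) ^ k * exp (- (c / 2) * v)"
    unfolding exp_halves[symmetric] by (simp add: ac_simps)
  finally show ?thesis
    unfolding v_def .
qed

theorem mainTheorem10:
  fixes \<epsilon> :: real
  assumes "CARD('d::finite) \<ge> 5"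
    and "0 < \<epsilon>" and "\<epsilon> < 1/12"
  shows "\<exists>u1>0. \<exists>\<xi>>0. \<exists>C>0. \<forall>u. 0 < u \<and> u < u1 \<longrightarrow>
           prob_C TYPE('d) \<epsilon> u \<ge> 1 - C * exp (- \<xi> * u powr (- \<epsilon>))"
proof -
  define c where "c = 1 / (8 * real CARD('d) * (real CARD('d) + 1) ^ 3 * (4 + real CARD('d)))"
  define k where "k = nat \<lceil>((1 / 2 - 2 * \<epsilon>) * real CARD('d) - 1) / \<epsilon>\<rceil>"
  define C where "C = 2 * 6 ^ CARD('d) * fact k * (2 / c) ^ k"
  define \<xi> where "\<xi> = c / 2"
  have "0 < \<xi>" "0 < C"
    unfolding \<xi>_def C_def c_def by simp_all
  have "1 - C * exp (- \<xi> * u powr (- \<epsilon>)) \<le> prob_C TYPE('d) \<epsilon> u" if "0 < u" "u < 1" for u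
  proof -
    have "u * (4 * L_scale \<epsilon> u + 2) ^ CARD('d) * (2 * exp (- (1 / (8 * real CARD('d) * (real CARD('d) + 1) ^ 3
        * (4 * (L_scale \<epsilon> u)\<^sup>2 + real CARD('d)))) * (u powr (-2 * \<epsilon>) * (L_scale \<epsilon> u)\<^sup>2)))
        \<le> C * exp (- \<xi> * u powr (- \<epsilon>))"
      unfolding C_def c_def k_def \<xi>_def by (rule union_bound_le_exp) (use assms that in simp_all)
    then show ?thesis
      using prob_C_ge[of u \<epsilon>, where 'd = 'd] assms(1) that by simp
  qed
  then show ?thesis
    using \<open>0 < \<xi>\<close> \<open>0 < C\<close> by (intro exI[of _ 1] exI[of _ \<xi>] exI[of _ C]) auto
qed

end
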